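(* Let $(\mu,\nu)\in\boldsymbol{\mathcal P}$ and consider the RRU with initial composition $(x,y)\in\mathbb S$, $D_0=x+y$. Let $Z_n=Z_0+M_n+A_n$ be the Doob decomposition of $Z_n$ with respect to $\{\mathcal A_n\}$. If $D_0\ge2\beta$, then $$\mathbb E\big(\sup_r|A_r|\big)\le\frac{\beta}{D_0}.$$
   Context: Fix $0<m_0\le\beta<\infty$. $\boldsymbol{\mathcal P}$: pairs $(\mu,\nu)$ of probability measures on $[0,\beta]$ with $\int k\,\mu(dk)=\int k\,\nu(dk)\ge m_0$. $\mathbb S=[0,\infty)^2\setminus\{(0,0)\}$. RRU: with $\{U_n\}$ i.i.d. uniform$[0,1]$ independent of i.i.d. $\{(V_n,W_n)\}$ with uniform$[0,1]$ marginals, $R_X(n)=q_\mu(V_n)$, $R_Y(n)=q_\nu(W_n)$, $X_0=x,Y_0=y$, $X_{n+1}=X_n+R_X(n+1)\mathbb I(n+1)$, $Y_{n+1}=Y_n+R_Y(n+1)(1-\mathbb I(n+1))$, $\mathbb I(n+1)=\mathbf 1\{U_{n+1}\le X_n/(X_n+Y_n)\}$; $D_n=X_n+Y_n$, $Z_n=X_n/D_n$; $\mathcal A_n=\sigma(\mathbb I(j),R_X(j),R_Y(j):j\le n)$ ($\mathcal A_0$ trivial). Doob decomposition: $\{M_n\}$ is a zero-mean $\{\mathcal A_n\}$-martingale with $M_0=0$ and $\{A_n\}$ is a predictable process with $A_0=0$. *)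

theory Defs
  imports "HOL-Probability.Probability"
begin

text \<open>For u in (0,1] this is the usual
  left-continuous inverse of the distribution function; for u = 0 it gives 0.\<close>
definition quantile :: "real measure \<Rightarrow> real \<Rightarrow> real" where
  "quantile \<mu> u = Inf {k::real. 0 \<le> k \<and> u \<le> measure \<mu> {..k}}"

definition pair_class :: "real \<Rightarrow> real \<Rightarrow> real measure \<Rightarrow> real measure \<Rightarrow> bool" where
  "pair_class m0 \<beta> \<mu> \<nu> \<longleftrightarrow>
     prob_space \<mu> \<and> sets \<mu> = sets borel \<and> measure \<mu> {0..\<beta>} = 1 \<and>
     prob_space \<nu> \<and> sets \<nu> = sets borel \<and> measure \<nu> {0..\<beta>} = 1 \<and>
     (\<integral>k. k \<partial>\<mu>) = (\<integral>k. k \<partial>\<nu>) \<and> (\<integral>k. k \<partial>\<mu>) \<ge> m0"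

text \<open>Path of the randomly reinforced urn (X_n, Y_n), given the sample values
  u n = U_n, rx n = R_X(n), ry n = R_Y(n) (indices n >= 1 are used).\<close>
primrec rru :: "real \<Rightarrow> real \<Rightarrow> (nat \<Rightarrow> real) \<Rightarrow> (nat \<Rightarrow> real) \<Rightarrow> (nat \<Rightarrow> real) \<Rightarrow> nat \<Rightarrow> real \<times> real" where
  "rru x y u rx ry 0 = (x, y)"
| "rru x y u rx ry (Suc n) =
     (let X = fst (rru x y u rx ry n); Y = snd (rru x y u rx ry n);
          I = (u (Suc n) \<le> X / (X + Y))
      in (if I then X + rx (Suc n) else X, if I then Y else Y + ry (Suc n)))"

definition rru_ind :: "real \<Rightarrow> real \<Rightarrow> (nat \<Rightarrow> real) \<Rightarrow> (nat \<Rightarrow> real) \<Rightarrow> (nat \<Rightarrow> real) \<Rightarrow> nat \<Rightarrow> real" where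
  "rru_ind x y u rx ry n =
     (case n of 0 \<Rightarrow> 0
      | Suc m \<Rightarrow> (let X = fst (rru x y u rx ry m); Y = snd (rru x y u rx ry m)
                  in if u (Suc m) \<le> X / (X + Y) then 1 else 0))"

text \<open>The RRU path at outcome omega, with R_X(j) = q_mu(V_j), R_Y(j) = q_nu(W_j).\<close>
definition rru_path :: "real measure \<Rightarrow> real measure \<Rightarrow> real \<Rightarrow> real \<Rightarrow> (nat \<Rightarrow> 'a \<Rightarrow> real) \<Rightarrow>
    (nat \<Rightarrow> 'a \<Rightarrow> real) \<Rightarrow> (nat \<Rightarrow> 'a \<Rightarrow> real) \<Rightarrow> nat \<Rightarrow> 'a \<Rightarrow> real \<times> real" where
  "rru_path \<mu> \<nu> x y U V W n \<omega> =
     rru x y (\<lambda>j. U j \<omega>) (\<lambda>j. quantile \<mu> (V j \<omega>)) (\<lambda>j. quantile \<nu> (W j \<omega>)) n"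

definition rru_indicator :: "real measure \<Rightarrow> real measure \<Rightarrow> real \<Rightarrow> real \<Rightarrow> (nat \<Rightarrow> 'a \<Rightarrow> real) \<Rightarrow>
    (nat \<Rightarrow> 'a \<Rightarrow> real) \<Rightarrow> (nat \<Rightarrow> 'a \<Rightarrow> real) \<Rightarrow> nat \<Rightarrow> 'a \<Rightarrow> real" where
  "rru_indicator \<mu> \<nu> x y U V W n \<omega> =
     rru_ind x y (\<lambda>j. U j \<omega>) (\<lambda>j. quantile \<mu> (V j \<omega>)) (\<lambda>j. quantile \<nu> (W j \<omega>)) n"

definition gen_filtration :: "'a measure \<Rightarrow> (nat \<Rightarrow> 'a \<Rightarrow> real) set \<Rightarrow> nat \<Rightarrow> 'a measure" where
  "gen_filtration M fs n =
     sigma (space M) (\<Union>j\<in>{1..n}. \<Union>f\<in>fs. {f j -` B \<inter> space M | B. B \<in> sets borel})"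

definition martingale_wrt :: "'a measure \<Rightarrow> (nat \<Rightarrow> 'a measure) \<Rightarrow> (nat \<Rightarrow> 'a \<Rightarrow> real) \<Rightarrow> bool" where
  "martingale_wrt M F X \<longleftrightarrow>
     (\<forall>n. integrable M (X n) \<and> X n \<in> borel_measurable (F n) \<and>
          (AE \<omega> in M. real_cond_exp M (F n) (X (Suc n)) \<omega> = X n \<omega>))"

definition predictable_wrt :: "(nat \<Rightarrow> 'a measure) \<Rightarrow> (nat \<Rightarrow> 'a \<Rightarrow> real) \<Rightarrow> bool" where
  "predictable_wrt F A \<longleftrightarrow> (\<forall>n. A (Suc n) \<in> borel_measurable (F n))"

end

theory Submission
  imports Defs
begin

text \<open>Write D = X + Y and z = X/D for the current composition and R_X, R_Y for the next
  reinforcements. The predictable increment A_(n+1) - A_n is the conditional expectation of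
  Z_(n+1) - Z_n given the past, which equals z(1 - z)(a - b) with a = E(R_X/(D + R_X)) and
  b = E(R_Y/(D + R_Y)). Since the two reinforcement laws live on [0, beta] and have the same
  mean m, both a and b lie in [m/(D + beta), m/D], an interval of width (beta/D) m/(D + beta).
  Hence the increment is at most beta/4 times the conditional expectation of 1/D_n - 1/D_(n+1),
  which is (z a + (1 - z) b)/D, and summing over n these bounds telescope:
  E(sup_r |A_r|) <= beta/(4 D_0).\<close>

definition distribution_on_Icc :: "real \<Rightarrow> real measure \<Rightarrow> bool" where
  "distribution_on_Icc \<beta> \<mu> \<longleftrightarrow> prob_space \<mu> \<and> sets \<mu> = sets borel \<and> measure \<mu> {0..\<beta>} = 1"

lemma distribution_on_Icc_nonneg: "distribution_on_Icc \<beta> \<mu> \<Longrightarrow> 0 \<le> \<beta>"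
  unfolding distribution_on_Icc_def by (cases "0 \<le> \<beta>") auto

lemma bound_in_quantile_set:
  assumes \<mu>: "distribution_on_Icc \<beta> \<mu>" and "u \<le> 1"
  shows "\<beta> \<in> {k::real. 0 \<le> k \<and> u \<le> measure \<mu> {..k}}"
proof -
  interpret prob_space \<mu> using \<mu> by (simp add: distribution_on_Icc_def)
  have "measure \<mu> {0..\<beta>} \<le> measure \<mu> {..\<beta>}"
    using \<mu> by (intro finite_measure_mono) (auto simp: distribution_on_Icc_def)
  then show ?thesis
    using \<mu> \<open>u \<le> 1\<close> distribution_on_Icc_nonneg[OF \<mu>] by (auto simp: distribution_on_Icc_def)
qed

lemma quantile_in_Icc:
  assumes \<mu>: "distribution_on_Icc \<beta> \<mu>" and "u \<le> 1"
  shows "quantile \<mu> u \<in> {0..\<beta>}"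
proof -
  let ?S = "{k::real. 0 \<le> k \<and> u \<le> measure \<mu> {..k}}"
  have \<beta>: "\<beta> \<in> ?S" by (rule bound_in_quantile_set[OF assms])
  have "0 \<le> Inf ?S" by (rule cInf_greatest) (use \<beta> in auto)
  moreover have "Inf ?S \<le> \<beta>" by (rule cInf_lower[OF \<beta>]) (auto intro: bdd_belowI[of _ 0])
  ultimately show ?thesis unfolding quantile_def by simp
qed

lemma quantile_mono_on:
  assumes \<mu>: "distribution_on_Icc \<beta> \<mu>"
  shows "mono_on {..1} (quantile \<mu>)"
proof (rule mono_onI)
  fix r s :: real assume rs: "r \<in> {..1}" "s \<in> {..1}" "r \<le> s"
  let ?S = "\<lambda>u. {k::real. 0 \<le> k \<and> u \<le> measure \<mu> {..k}}"
  have "\<beta> \<in> ?S s" using bound_in_quantile_set[OF \<mu>, of s] rs by simp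
  moreover have "bdd_below (?S r)" by (rule bdd_belowI[of _ 0]) auto
  moreover have "?S s \<subseteq> ?S r" using rs by auto
  ultimately show "quantile \<mu> r \<le> quantile \<mu> s"
    unfolding quantile_def by (intro cInf_superset_mono) auto
qed

lemma borel_measurable_quantile:
  assumes \<mu>: "distribution_on_Icc \<beta> \<mu>"
  shows "quantile \<mu> \<in> borel_measurable borel"
proof (rule borel_measurable_piecewise_mono[of "{{..1}, {1<..}}"])
  interpret prob_space \<mu> using \<mu> by (simp add: distribution_on_Icc_def)
  have "quantile \<mu> u = Inf {}" if "1 < u" for u
  proof -
    have "{k::real. 0 \<le> k \<and> u \<le> measure \<mu> {..k}} = {}"
      using prob_le_1 that by (smt (verit, best) Collect_empty_eq)
    then show ?thesis unfolding quantile_def by (simp only:)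
  qed
  then have "mono_on {1<..} (quantile \<mu>)" by (auto intro!: mono_onI)
  then show "mono_on c (quantile \<mu>)" if "c \<in> {{..1}, {1<..}}" for c
    using that quantile_mono_on[OF \<mu>] by auto
qed auto

lemma quantile_eq_Inf_cdf:
  assumes \<mu>: "distribution_on_Icc \<beta> \<mu>" and "0 < u"
  shows "quantile \<mu> u = Inf {x. u \<le> cdf \<mu> x}"
proof -
  interpret prob_space \<mu> using \<mu> by (simp add: distribution_on_Icc_def)
  have sets_\<mu>: "sets \<mu> = sets borel" and \<mu>_Icc: "measure \<mu> {0..\<beta>} = 1"
    using \<mu> by (auto simp: distribution_on_Icc_def)
  have cdf_neg: "cdf \<mu> k = 0" if "k < 0" for k
  proof -
    have "measure \<mu> {..k} \<le> measure \<mu> (UNIV - {0..\<beta>})"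
      by (rule finite_measure_mono) (use that in \<open>auto simp: sets_\<mu>\<close>)
    also have "\<dots> = 0" using prob_compl[of "{0..\<beta>}"] \<mu>_Icc sets_eq_imp_space_eq[OF sets_\<mu>]
      by (simp add: Compl_eq_Diff_UNIV[symmetric] sets_\<mu>)
    finally show ?thesis using measure_nonneg[of \<mu> "{..k}"] by (simp add: cdf_def)
  qed
  have "{k. 0 \<le> k \<and> u \<le> measure \<mu> {..k}} = {x. u \<le> cdf \<mu> x}"
  proof (intro Collect_cong iffI)
    fix k assume "u \<le> cdf \<mu> k"
    then show "0 \<le> k \<and> u \<le> measure \<mu> {..k}"
      using cdf_neg[of k] \<open>0 < u\<close> by (cases "k < 0") (auto simp: cdf_def)
  qed (auto simp: cdf_def)
  then show ?thesis unfolding quantile_def by simp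
qed

lemma distr_uniform_quantile:
  assumes \<mu>: "distribution_on_Icc \<beta> \<mu>"
  shows "distr (uniform_measure lborel {0..1}) borel (quantile \<mu>) = \<mu>"
proof -
  interpret prob_space \<mu> using \<mu> by (simp add: distribution_on_Icc_def)
  have rd: "real_distribution \<mu>"
    using \<mu> by (simp add: real_distribution_def real_distribution_axioms_def distribution_on_Icc_def)
  interpret C: cdf_distribution \<mu> unfolding cdf_distribution_def by (rule rd)
  have qm[measurable]: "quantile \<mu> \<in> borel_measurable borel" by (rule borel_measurable_quantile[OF \<mu>])
  let ?U = "uniform_measure lborel {0..1::real}"
  interpret U: prob_space ?U by (rule prob_space_uniform_measure) auto
  show ?thesis
  proof (rule cdf_unique)
    show "real_distribution (distr ?U borel (quantile \<mu>))"
      by (rule U.real_distribution_distr) simp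
    show "cdf (distr ?U borel (quantile \<mu>)) = cdf \<mu>"
    proof
      fix x
      have "cdf (distr ?U borel (quantile \<mu>)) x = measure lborel ({0..1} \<inter> quantile \<mu> -` {..x})"
        unfolding cdf_def using measurable_sets_borel[OF qm, of "{..x}"]
        by (subst measure_distr) (simp_all add: measure_uniform_measure)
      also have "\<dots> = measure lborel {0<..cdf \<mu> x}"
      proof (rule measure_eq_AE)
        show "AE u in lborel. (u \<in> {0..1} \<inter> quantile \<mu> -` {..x}) = (u \<in> {0<..cdf \<mu> x})"
          using AE_lborel_singleton[of "0::real"] AE_lborel_singleton[of "1::real"]
        proof eventually_elim
          case (elim u)
          show ?case
          proof (cases "0 < u \<and> u < 1")
            case True
            then have "u \<le> cdf \<mu> x \<longleftrightarrow> C.I u \<le> x" by (intro C.pseudoinverse) auto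
            then show ?thesis using True quantile_eq_Inf_cdf[OF \<mu>, of u] by auto
          next
            case False
            then show ?thesis using elim C.cdf_bounded_prob[of x] by auto
          qed
        qed
      qed auto
      also have "\<dots> = cdf \<mu> x" using C.cdf_nonneg[of x] by simp
      finally show "cdf (distr ?U borel (quantile \<mu>)) x = cdf \<mu> x" .
    qed
  qed (rule rd)
qed

lemma (in prob_space) indep_var_integral_iterated:
  fixes f :: "_ \<Rightarrow> real"
  assumes ind: "indep_var S X T Y"
    and f[measurable]: "f \<in> borel_measurable (S \<Otimes>\<^sub>M T)"
    and int: "integrable M (\<lambda>\<omega>. f (X \<omega>, Y \<omega>))"
  shows "(\<integral>\<omega>. f (X \<omega>, Y \<omega>) \<partial>M) = (\<integral>\<omega>. (\<integral>\<omega>'. f (X \<omega>, Y \<omega>') \<partial>M) \<partial>M)"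
    and "integrable M (\<lambda>\<omega>. (\<integral>\<omega>'. f (X \<omega>, Y \<omega>') \<partial>M))"
proof -
  have rvX[measurable]: "X \<in> measurable M S" and rvY[measurable]: "Y \<in> measurable M T"
    and eq: "distr M S X \<Otimes>\<^sub>M distr M T Y = distr M (S \<Otimes>\<^sub>M T) (\<lambda>x. (X x, Y x))"
    using ind unfolding indep_var_distribution_eq by auto
  interpret PX: prob_space "distr M S X" by (rule prob_space_distr) simp
  interpret PY: prob_space "distr M T Y" by (rule prob_space_distr) simp
  interpret P: pair_sigma_finite "distr M S X" "distr M T Y" ..
  have intP: "integrable (distr M S X \<Otimes>\<^sub>M distr M T Y) f"
    unfolding eq using int integrable_distr_eq[of "\<lambda>x. (X x, Y x)" M "S \<Otimes>\<^sub>M T" f]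
      measurable_Pair[OF rvX rvY] by simp
  have inner_meas: "(\<lambda>s. \<integral>t. f (s, t) \<partial>distr M T Y) \<in> borel_measurable S"
  proof -
    have "sets (distr M S X \<Otimes>\<^sub>M distr M T Y) = sets (S \<Otimes>\<^sub>M T)"
      by (rule sets_pair_measure_cong) simp_all
    then have "f \<in> borel_measurable (distr M S X \<Otimes>\<^sub>M distr M T Y)"
      using f measurable_cong_sets by blast
    then have "(\<lambda>s. \<integral>t. f (s, t) \<partial>distr M T Y) \<in> borel_measurable (distr M S X)"
      by (intro PY.borel_measurable_lebesgue_integral) simp
    then show ?thesis using measurable_cong_sets[of "distr M S X" S borel borel] by simp
  qed
  have inner: "(\<integral>t. f (X \<omega>, t) \<partial>distr M T Y) = (\<integral>\<omega>'. f (X \<omega>, Y \<omega>') \<partial>M)" if "\<omega> \<in> space M" for \<omega>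
    using measurable_space[OF rvX that] by (intro integral_distr rvY) simp
  have "(\<integral>\<omega>. f (X \<omega>, Y \<omega>) \<partial>M) = integral\<^sup>L (distr M (S \<Otimes>\<^sub>M T) (\<lambda>x. (X x, Y x))) f"
    by (rule integral_distr[symmetric]) (simp_all add: measurable_Pair)
  also have "\<dots> = (\<integral>s. (\<integral>t. f (s, t) \<partial>distr M T Y) \<partial>distr M S X)"
    unfolding eq[symmetric] by (rule P.integral_fst'[OF intP, symmetric])
  also have "\<dots> = (\<integral>\<omega>. (\<integral>t. f (X \<omega>, t) \<partial>distr M T Y) \<partial>M)"
    using inner_meas by (intro integral_distr rvX)
  also have "\<dots> = (\<integral>\<omega>. (\<integral>\<omega>'. f (X \<omega>, Y \<omega>') \<partial>M) \<partial>M)"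
    using inner by (intro Bochner_Integration.integral_cong) simp_all
  finally show "(\<integral>\<omega>. f (X \<omega>, Y \<omega>) \<partial>M) = (\<integral>\<omega>. (\<integral>\<omega>'. f (X \<omega>, Y \<omega>') \<partial>M) \<partial>M)" .
  have "integrable (distr M S X) (\<lambda>s. \<integral>t. f (s, t) \<partial>distr M T Y)"
    by (rule P.integrable_fst'[OF intP])
  then have "integrable M (\<lambda>\<omega>. \<integral>t. f (X \<omega>, t) \<partial>distr M T Y)"
    using integrable_distr_eq[OF rvX inner_meas] by simp
  then show "integrable M (\<lambda>\<omega>. (\<integral>\<omega>'. f (X \<omega>, Y \<omega>') \<partial>M))"
    using inner by (subst (asm) Bochner_Integration.integrable_cong[OF refl]) simp_all
qed

lemma (in prob_space) uniform_var_le_1: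
  assumes "distr M borel R = uniform_measure lborel {0..1::real}" "R \<in> borel_measurable M"
  shows "AE \<omega> in M. R \<omega> \<le> 1"
proof -
  have "AE u in distr M borel R. u \<le> 1" unfolding assms(1) by (rule AE_uniform_measureI) auto
  then show ?thesis using assms(2) by (subst (asm) AE_distr_iff) auto
qed

lemma (in prob_space) integral_uniform_var:
  fixes f :: "real \<Rightarrow> real"
  assumes "distr M borel R = uniform_measure lborel {0..1}" "R \<in> borel_measurable M"
    and "f \<in> borel_measurable borel"
  shows "(\<integral>\<omega>. f (R \<omega>) \<partial>M) = (\<integral>u. f u \<partial>uniform_measure lborel {0..1})"
  using integral_distr[OF assms(2,3)] assms(1) by simp

lemma (in prob_space) prob_uniform_var_le:
  assumes "distr M borel R = uniform_measure lborel {0..1}" "R \<in> borel_measurable M"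
    and "0 \<le> z" "z \<le> 1"
  shows "(\<integral>\<omega>. indicator {..z} (R \<omega>) \<partial>M) = (z::real)"
proof -
  have "(\<integral>\<omega>. indicator {..z} (R \<omega>) \<partial>M) = measure (uniform_measure lborel {0..1::real}) {..z}"
    by (subst integral_uniform_var[OF assms(1,2)]) simp_all
  also have "\<dots> = measure lborel ({0..1} \<inter> {..z})" by (subst measure_uniform_measure) auto
  also have "{0..1} \<inter> {..z} = {0..z}" using assms by auto
  finally show ?thesis using assms by simp
qed

lemma (in prob_space) integral_quantile_uniform_var:
  assumes \<mu>: "distribution_on_Icc \<beta> \<mu>"
    and "distr M borel R = uniform_measure lborel {0..1}" "R \<in> borel_measurable M"
  shows "(\<integral>\<omega>. quantile \<mu> (R \<omega>) \<partial>M) = (\<integral>k. k \<partial>\<mu>)"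
proof -
  have [measurable]: "quantile \<mu> \<in> borel_measurable borel" by (rule borel_measurable_quantile[OF \<mu>])
  have "(\<integral>\<omega>. quantile \<mu> (R \<omega>) \<partial>M) = (\<integral>u. quantile \<mu> u \<partial>uniform_measure lborel {0..1})"
    by (rule integral_uniform_var[OF assms(2,3)]) simp
  also have "\<dots> = (\<integral>k. k \<partial>distr (uniform_measure lborel {0..1}) borel (quantile \<mu>))"
    by (rule integral_distr[symmetric]) auto
  finally show ?thesis unfolding distr_uniform_quantile[OF \<mu>] .
qed

lemma (in prob_space) integral_ratio_bounds:
  fixes R :: "'a \<Rightarrow> real"
  assumes [measurable]: "R \<in> borel_measurable M" and R: "AE \<omega> in M. 0 \<le> R \<omega> \<and> R \<omega> \<le> \<beta>"
    and D: "0 < D"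
  shows "integrable M (\<lambda>\<omega>. R \<omega> / (D + R \<omega>))"
    and "(\<integral>\<omega>. R \<omega> \<partial>M) / (D + \<beta>) \<le> (\<integral>\<omega>. R \<omega> / (D + R \<omega>) \<partial>M)"
    and "(\<integral>\<omega>. R \<omega> / (D + R \<omega>) \<partial>M) \<le> (\<integral>\<omega>. R \<omega> \<partial>M) / D"
proof -
  have int_R: "integrable M R" using R by (intro integrable_const_bound[of _ \<beta>]) auto
  show int_ratio: "integrable M (\<lambda>\<omega>. R \<omega> / (D + R \<omega>))"
    using R D by (intro integrable_const_bound[of _ 1]) auto
  have "(\<integral>\<omega>. R \<omega> / (D + \<beta>) \<partial>M) \<le> (\<integral>\<omega>. R \<omega> / (D + R \<omega>) \<partial>M)"
    using int_R int_ratio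
  proof (intro integral_mono_AE)
    show "AE \<omega> in M. R \<omega> / (D + \<beta>) \<le> R \<omega> / (D + R \<omega>)"
      using R by eventually_elim (use D in \<open>auto intro!: divide_left_mono\<close>)
  qed simp
  then show "(\<integral>\<omega>. R \<omega> \<partial>M) / (D + \<beta>) \<le> (\<integral>\<omega>. R \<omega> / (D + R \<omega>) \<partial>M)" by simp
  have "(\<integral>\<omega>. R \<omega> / (D + R \<omega>) \<partial>M) \<le> (\<integral>\<omega>. R \<omega> / D \<partial>M)"
  proof (rule integral_mono_AE)
    show "integrable M (\<lambda>\<omega>. R \<omega> / D)" using int_R by simp
    show "AE \<omega> in M. R \<omega> / (D + R \<omega>) \<le> R \<omega> / D"
      using R by eventually_elim (use D in \<open>auto intro!: divide_left_mono\<close>)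
  qed (rule int_ratio)
  then show "(\<integral>\<omega>. R \<omega> / (D + R \<omega>) \<partial>M) \<le> (\<integral>\<omega>. R \<omega> \<partial>M) / D" by simp
qed

lemma (in prob_space) predictable_increment_eq_cond_exp:
  fixes Z Mart A :: "nat \<Rightarrow> 'a \<Rightarrow> real"
  assumes sub: "subalgebra M (F n)"
    and mart: "martingale_wrt M F Mart"
    and A_meas[measurable]: "A n \<in> borel_measurable (F n)" "A (Suc n) \<in> borel_measurable (F n)"
    and dZ_int: "integrable M (\<lambda>\<omega>. Z (Suc n) \<omega> - Z n \<omega>)"
    and doob: "AE \<omega> in M. \<forall>n. Z n \<omega> = Z 0 \<omega> + Mart n \<omega> + A n \<omega>"
  shows "AE \<omega> in M. A (Suc n) \<omega> - A n \<omega> = real_cond_exp M (F n) (\<lambda>\<omega>. Z (Suc n) \<omega> - Z n \<omega>) \<omega>"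
proof -
  interpret S: finite_measure_subalgebra M "F n" by unfold_locales (rule sub)
  have Mart_int: "integrable M (Mart k)" for k using mart by (simp add: martingale_wrt_def)
  have Mart_F[measurable]: "Mart n \<in> borel_measurable (F n)" using mart by (simp add: martingale_wrt_def)
  have Mart_ce: "AE \<omega> in M. real_cond_exp M (F n) (Mart (Suc n)) \<omega> = Mart n \<omega>"
    using mart by (simp add: martingale_wrt_def)
  define H where "H \<omega> = A (Suc n) \<omega> - A n \<omega>" for \<omega>
  define dMart where "dMart \<omega> = Mart (Suc n) \<omega> - Mart n \<omega>" for \<omega>
  have H_F[measurable]: "H \<in> borel_measurable (F n)" unfolding H_def by measurable
  have H_M[measurable]: "H \<in> borel_measurable M" by (rule measurable_from_subalg[OF sub H_F])
  have dMart_int: "integrable M dMart" unfolding dMart_def using Mart_int by simp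
  have dZ_eq: "AE \<omega> in M. Z (Suc n) \<omega> - Z n \<omega> = dMart \<omega> + H \<omega>"
    using doob
  proof eventually_elim
    case (elim \<omega>)
    then have "Z (Suc n) \<omega> = Z 0 \<omega> + Mart (Suc n) \<omega> + A (Suc n) \<omega>" "Z n \<omega> = Z 0 \<omega> + Mart n \<omega> + A n \<omega>"
      by blast+
    then show ?case by (simp add: H_def dMart_def)
  qed
  have "integrable M (\<lambda>\<omega>. (Z (Suc n) \<omega> - Z n \<omega>) - dMart \<omega>)" using dZ_int dMart_int by simp
  moreover have "AE \<omega> in M. (Z (Suc n) \<omega> - Z n \<omega>) - dMart \<omega> = H \<omega>"
    using dZ_eq by eventually_elim simp
  ultimately have H_int: "integrable M H" by (rule integrable_cong_AE_imp[OF _ H_M])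
  have "AE \<omega> in M. real_cond_exp M (F n) (\<lambda>\<omega>. Z (Suc n) \<omega> - Z n \<omega>) \<omega>
                   = real_cond_exp M (F n) (\<lambda>\<omega>. dMart \<omega> + H \<omega>) \<omega>"
    using borel_measurable_integrable[OF dZ_int] borel_measurable_integrable[OF dMart_int]
    by (intro S.real_cond_exp_cong dZ_eq) auto
  moreover have "AE \<omega> in M. real_cond_exp M (F n) (\<lambda>\<omega>. dMart \<omega> + H \<omega>) \<omega>
                   = real_cond_exp M (F n) dMart \<omega> + real_cond_exp M (F n) H \<omega>"
    by (rule S.real_cond_exp_add[OF dMart_int H_int])
  moreover have "AE \<omega> in M. real_cond_exp M (F n) dMart \<omega>
                   = real_cond_exp M (F n) (Mart (Suc n)) \<omega> - real_cond_exp M (F n) (Mart n) \<omega>"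
    unfolding dMart_def by (rule S.real_cond_exp_diff[OF Mart_int Mart_int])
  moreover have "AE \<omega> in M. real_cond_exp M (F n) (Mart n) \<omega> = Mart n \<omega>"
    by (rule S.real_cond_exp_F_meas[OF Mart_int Mart_F])
  moreover have "AE \<omega> in M. real_cond_exp M (F n) H \<omega> = H \<omega>"
    by (rule S.real_cond_exp_F_meas[OF H_int H_F])
  ultimately show ?thesis using Mart_ce by eventually_elim (simp add: H_def)
qed

lemma nn_integral_SUP_abs_le_suminf_increments:
  fixes A :: "nat \<Rightarrow> 'a \<Rightarrow> real"
  assumes A0: "\<And>\<omega>. A 0 \<omega> = 0" and [measurable]: "\<And>n. A n \<in> borel_measurable M"
  shows "(\<integral>\<^sup>+\<omega>. (SUP r. ennreal \<bar>A r \<omega>\<bar>) \<partial>M) \<le> (\<Sum>n. \<integral>\<^sup>+\<omega>. ennreal \<bar>A (Suc n) \<omega> - A n \<omega>\<bar> \<partial>M)"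
proof -
  have "\<bar>A r \<omega>\<bar> \<le> (\<Sum>n<r. \<bar>A (Suc n) \<omega> - A n \<omega>\<bar>)" for r \<omega>
  proof (induction r)
    case (Suc r)
    then show ?case by simp
  qed (simp add: A0)
  then have "ennreal \<bar>A r \<omega>\<bar> \<le> (\<Sum>n. ennreal \<bar>A (Suc n) \<omega> - A n \<omega>\<bar>)" for r \<omega>
    by (intro order.trans[OF _ sum_le_suminf[of _ "{..<r}"]]) (auto intro: ennreal_leI)
  then have "(\<integral>\<^sup>+\<omega>. (SUP r. ennreal \<bar>A r \<omega>\<bar>) \<partial>M) \<le> (\<integral>\<^sup>+\<omega>. (\<Sum>n. ennreal \<bar>A (Suc n) \<omega> - A n \<omega>\<bar>) \<partial>M)"
    by (intro nn_integral_mono SUP_least)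
  also have "\<dots> = (\<Sum>n. \<integral>\<^sup>+\<omega>. ennreal \<bar>A (Suc n) \<omega> - A n \<omega>\<bar> \<partial>M)"
    by (rule nn_integral_suminf) measurable
  finally show ?thesis .
qed

lemma suminf_ennreal_telescope_le:
  fixes e :: "nat \<Rightarrow> real"
  assumes dec: "\<And>n. e (Suc n) \<le> e n" and nonneg: "\<And>n. 0 \<le> e n"
  shows "(\<Sum>n. ennreal (e n - e (Suc n))) \<le> ennreal (e 0)"
proof (rule suminf_le_const)
  fix N
  have "(\<Sum>n<N. ennreal (e n - e (Suc n))) = ennreal (\<Sum>n<N. e n - e (Suc n))"
    using dec by (intro sum_ennreal) simp
  also have "(\<Sum>n<N. e n - e (Suc n)) = e 0 - e N"
    using sum_lessThan_telescope[of "\<lambda>n. - e n" N] by simp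
  finally show "(\<Sum>n<N. ennreal (e n - e (Suc n))) \<le> ennreal (e 0)"
    using nonneg[of N] by (simp add: ennreal_leI)
qed auto

lemma reinforcement_step_identities:
  fixes X Y r :: real assumes "0 \<le> r" "0 < X + Y"
  shows "(X + r) / (X + r + Y) - X / (X + Y) = (1 - X / (X + Y)) * (r / (X + Y + r))"
    and "1 / (X + Y) - 1 / (X + r + Y) = r / (X + Y + r) / (X + Y)"
    and "X / (X + (Y + r)) - X / (X + Y) = - (X / (X + Y) * (r / (X + Y + r)))"
    and "1 / (X + Y) - 1 / (X + (Y + r)) = r / (X + Y + r) / (X + Y)"
proof -
  have p: "0 < X + Y + r" "X + r + Y = X + Y + r" "X + (Y + r) = X + Y + r" using assms by auto
  show "(X + r) / (X + r + Y) - X / (X + Y) = (1 - X / (X + Y)) * (r / (X + Y + r))"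
    unfolding p(2) using p(1) assms by (simp add: field_simps)
  show "1 / (X + Y) - 1 / (X + r + Y) = r / (X + Y + r) / (X + Y)"
    unfolding p(2) using p(1) assms by (simp add: field_simps)
  show "X / (X + (Y + r)) - X / (X + Y) = - (X / (X + Y) * (r / (X + Y + r)))"
    unfolding p(3) using p(1) assms by (simp add: field_simps)
  show "1 / (X + Y) - 1 / (X + (Y + r)) = r / (X + Y + r) / (X + Y)"
    unfolding p(3) using p(1) assms by (simp add: field_simps)
qed

text \<open>With a and b the expected relative gains of the two colours: both lie in the same interval
  because the reinforcement laws have the same mean m, and the width of that interval is
  beta/D times its left end.\<close>

lemma abs_drift_le_inverse_drift:
  fixes z D \<beta> m a b :: real
  assumes z: "0 \<le> z" "z \<le> 1" and D: "0 < D" and \<beta>: "0 \<le> \<beta>" and m: "0 \<le> m"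
    and a: "m / (D + \<beta>) \<le> a" "a \<le> m / D" and b: "m / (D + \<beta>) \<le> b" "b \<le> m / D"
  shows "0 \<le> (z * a + (1 - z) * b) / D"
    and "\<bar>z * (1 - z) * (a - b)\<bar> \<le> \<beta> / 4 * ((z * a + (1 - z) * b) / D)"
proof -
  have low: "m / (D + \<beta>) \<le> z * a + (1 - z) * b"
  proof -
    have "z * (m / (D + \<beta>)) \<le> z * a" using z a by (intro mult_left_mono) auto
    moreover have "(1 - z) * (m / (D + \<beta>)) \<le> (1 - z) * b" using z b by (intro mult_left_mono) auto
    moreover have "z * (m / (D + \<beta>)) + (1 - z) * (m / (D + \<beta>)) = m / (D + \<beta>)"
      by (metis add_diff_cancel_left' diff_add_cancel distrib_right mult_1)
    ultimately show ?thesis by linarith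
  qed
  then show "0 \<le> (z * a + (1 - z) * b) / D" using m D \<beta> by (smt (verit) divide_nonneg_pos)
  have width: "\<bar>a - b\<bar> \<le> \<beta> * (m / (D + \<beta>) / D)"
  proof -
    have "m / D - m / (D + \<beta>) = \<beta> * (m / (D + \<beta>) / D)" using D \<beta> by (simp add: field_simps)
    then show ?thesis using a b by linarith
  qed
  have zz: "z * (1 - z) \<le> 1 / 4" "0 \<le> z * (1 - z)"
    using zero_le_power2[of "z - 1/2"] z
    by (simp add: power2_eq_square algebra_simps, simp add: mult_nonneg_nonneg)
  have "\<bar>z * (1 - z) * (a - b)\<bar> = z * (1 - z) * \<bar>a - b\<bar>" using z by (simp add: abs_mult)
  also have "\<dots> \<le> 1 / 4 * (\<beta> * (m / (D + \<beta>) / D))"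
    using width zz by (intro mult_mono) auto
  also have "\<dots> = \<beta> / 4 * (m / (D + \<beta>) / D)" by simp
  also have "\<dots> \<le> \<beta> / 4 * ((z * a + (1 - z) * b) / D)"
    using low D \<beta> by (intro mult_left_mono divide_right_mono) auto
  finally show "\<bar>z * (1 - z) * (a - b)\<bar> \<le> \<beta> / 4 * ((z * a + (1 - z) * b) / D)" .
qed

lemma rru_cong:
  assumes "\<And>j. 1 \<le> j \<Longrightarrow> j \<le> n \<Longrightarrow> u j = u' j \<and> rx j = rx' j \<and> ry j = ry' j"
  shows "rru x y u rx ry n = rru x y u' rx' ry' n"
  using assms by (induction n) (auto simp: Let_def)

lemma rru_ind_cong:
  assumes "\<And>j. 1 \<le> j \<Longrightarrow> j \<le> n \<Longrightarrow> u j = u' j \<and> rx j = rx' j \<and> ry j = ry' j"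
  shows "rru_ind x y u rx ry n = rru_ind x y u' rx' ry' n"
proof (cases n)
  case (Suc m)
  have "rru x y u rx ry m = rru x y u' rx' ry' m" by (rule rru_cong) (use assms Suc in auto)
  moreover have "u (Suc m) = u' (Suc m)" using assms Suc by auto
  ultimately show ?thesis using Suc by (simp add: rru_ind_def)
qed (simp add: rru_ind_def)

lemma fst_rru_Suc:
  "fst (rru x y u rx ry (Suc n)) = fst (rru x y u rx ry n) + rru_ind x y u rx ry (Suc n) * rx (Suc n)"
  by (simp add: rru_ind_def Let_def)

lemma snd_rru_Suc:
  "snd (rru x y u rx ry (Suc n)) =
     snd (rru x y u rx ry n) + (1 - rru_ind x y u rx ry (Suc n)) * ry (Suc n)"
  by (simp add: rru_ind_def Let_def)

lemma rru_ind_01: "rru_ind x y u rx ry n \<in> {0, 1}"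
  by (auto simp: rru_ind_def Let_def split: nat.split)

lemma borel_measurable_fst_snd_real[measurable]:
  "(fst :: real \<times> real \<Rightarrow> real) \<in> borel_measurable borel"
  "(snd :: real \<times> real \<Rightarrow> real) \<in> borel_measurable borel"
  by (auto intro!: borel_measurable_continuous_onI continuous_intros)

locale rru_model = prob_space M
  for M :: "'a measure" +
  fixes \<mu> \<nu> :: "real measure" and \<beta> x y :: real and U V W :: "nat \<Rightarrow> 'a \<Rightarrow> real"
  assumes \<mu>: "distribution_on_Icc \<beta> \<mu>" and \<nu>: "distribution_on_Icc \<beta> \<nu>"
      and equal_means: "(\<integral>k. k \<partial>\<mu>) = (\<integral>k. k \<partial>\<nu>)"
      and xy: "0 \<le> x" "0 \<le> y" "0 < x + y"
      and U_unif: "\<And>n. distr M borel (U n) = uniform_measure lborel {0..1}"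
      and V_unif: "\<And>n. distr M borel (V n) = uniform_measure lborel {0..1}"
      and W_unif: "\<And>n. distr M borel (W n) = uniform_measure lborel {0..1}"
      and indep: "indep_vars (\<lambda>_. borel :: (real \<times> real) measure)
                    (case_sum (\<lambda>n \<omega>. (U n \<omega>, 0)) (\<lambda>n \<omega>. (V n \<omega>, W n \<omega>))) UNIV"
begin

abbreviation "q\<mu> \<equiv> quantile \<mu>"
abbreviation "q\<nu> \<equiv> quantile \<nu>"

lemma measurable_quantiles[measurable]: "q\<mu> \<in> borel_measurable borel" "q\<nu> \<in> borel_measurable borel"
  by (rule borel_measurable_quantile[OF \<mu>], rule borel_measurable_quantile[OF \<nu>])

text \<open>All sampling variables are gathered into one independent family draw, indexed by
  Inl j for the choice variable U j and by Inr j for the reinforcement pair (V j, W j).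
  The urn up to time n is a function of past n, the next step a function of next_draws n,
  and the two are independent.\<close>

definition "draw = case_sum (\<lambda>n \<omega>. (U n \<omega>, 0)) (\<lambda>n \<omega>. (V n \<omega>, W n \<omega>))"
definition "past_idx n = Inl ` {..n} \<union> Inr ` {..n::nat}"
definition "next_idx n = {Inl (Suc n), Inr (Suc n::nat)}"
definition "past n \<omega> = restrict (\<lambda>i. draw i \<omega>) (past_idx n)"
definition "next_draws n \<omega> = restrict (\<lambda>i. draw i \<omega>) (next_idx n)"
definition "past_space n = PiM (past_idx n) (\<lambda>_. borel :: (real \<times> real) measure)"
definition "next_space n = PiM (next_idx n) (\<lambda>_. borel :: (real \<times> real) measure)"
definition "urn_of_past n s =
  rru x y (\<lambda>j. fst (s (Inl j))) (\<lambda>j. q\<mu> (fst (s (Inr j)))) (\<lambda>j. q\<nu> (snd (s (Inr j)))) n"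

definition "urnX n \<omega> = fst (rru_path \<mu> \<nu> x y U V W n \<omega>)"
definition "urnY n \<omega> = snd (rru_path \<mu> \<nu> x y U V W n \<omega>)"
definition "urnZ n \<omega> = urnX n \<omega> / (urnX n \<omega> + urnY n \<omega>)"

lemma measurable_draw[measurable]: "draw i \<in> borel_measurable M"
  using indep unfolding indep_vars_def draw_def by auto

lemma measurable_UVW[measurable]:
  "U j \<in> borel_measurable M" "V j \<in> borel_measurable M" "W j \<in> borel_measurable M"
proof -
  have "(\<lambda>\<omega>. fst (draw (Inl j) \<omega>)) \<in> borel_measurable M" "(\<lambda>\<omega>. fst (draw (Inr j) \<omega>)) \<in> borel_measurable M"
    "(\<lambda>\<omega>. snd (draw (Inr j) \<omega>)) \<in> borel_measurable M"
    by measurable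
  then show "U j \<in> borel_measurable M" "V j \<in> borel_measurable M" "W j \<in> borel_measurable M"
    by (simp_all add: draw_def)
qed

lemma measurable_past[measurable]: "past n \<in> measurable M (past_space n)"
  unfolding past_def past_space_def by measurable

lemma measurable_next_draws[measurable]: "next_draws n \<in> measurable M (next_space n)"
  unfolding next_draws_def next_space_def by measurable

lemma indep_past_next_draws: "indep_var (past_space n) (past n) (next_space n) (next_draws n)"
  unfolding past_space_def next_space_def past_def next_draws_def
  by (rule indep_var_restrict[OF indep[folded draw_def]]) (auto simp: past_idx_def next_idx_def)

lemma measurable_past_component[measurable]:
  assumes "j \<le> n"
  shows "(\<lambda>s. s (Inl j)) \<in> measurable (past_space n) borel"
    and "(\<lambda>s. s (Inr j)) \<in> measurable (past_space n) borel"
  using assms unfolding past_space_def past_idx_def by (auto intro!: measurable_component_singleton)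

lemma measurable_next_component[measurable]:
  "(\<lambda>t. t (Inl (Suc n))) \<in> measurable (next_space n) borel"
  "(\<lambda>t. t (Inr (Suc n))) \<in> measurable (next_space n) borel"
  unfolding next_space_def next_idx_def by (auto intro!: measurable_component_singleton)

lemma next_draws_Inl: "next_draws n \<omega> (Inl (Suc n)) = (U (Suc n) \<omega>, 0)"
  by (simp add: next_draws_def next_idx_def draw_def)

lemma next_draws_Inr: "next_draws n \<omega> (Inr (Suc n)) = (V (Suc n) \<omega>, W (Suc n) \<omega>)"
  by (simp add: next_draws_def next_idx_def draw_def)

lemma past_Inr: "j \<le> n \<Longrightarrow> past n \<omega> (Inr j) = (V j \<omega>, W j \<omega>)"
  by (simp add: past_def past_idx_def draw_def)

lemma rru_path_eq_urn_of_past: "k \<le> n \<Longrightarrow> rru_path \<mu> \<nu> x y U V W k \<omega> = urn_of_past k (past n \<omega>)"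
  unfolding rru_path_def urn_of_past_def by (rule rru_cong) (auto simp: past_def past_idx_def draw_def)

lemma rru_indicator_eq_past: "k \<le> n \<Longrightarrow> rru_indicator \<mu> \<nu> x y U V W k \<omega> =
   rru_ind x y (\<lambda>j. fst (past n \<omega> (Inl j))) (\<lambda>j. q\<mu> (fst (past n \<omega> (Inr j))))
     (\<lambda>j. q\<nu> (snd (past n \<omega> (Inr j)))) k"
  unfolding rru_indicator_def by (rule rru_ind_cong) (auto simp: past_def past_idx_def draw_def)

lemma measurable_urn_of_past:
  assumes "k \<le> n"
  shows "(\<lambda>s. fst (urn_of_past k s)) \<in> borel_measurable (past_space n) \<and>
         (\<lambda>s. snd (urn_of_past k s)) \<in> borel_measurable (past_space n)"
  using assms
proof (induction k)
  case 0 then show ?case by (simp add: urn_of_past_def)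
next
  case (Suc k)
  then have [measurable]: "(\<lambda>s. fst (urn_of_past k s)) \<in> borel_measurable (past_space n)"
    "(\<lambda>s. snd (urn_of_past k s)) \<in> borel_measurable (past_space n)"
    by auto
  have [measurable]: "(\<lambda>s. s (Inl (Suc k))) \<in> measurable (past_space n) borel"
    "(\<lambda>s. s (Inr (Suc k))) \<in> measurable (past_space n) borel"
    using Suc.prems by (auto intro: measurable_past_component)
  let ?draw_X = "\<lambda>s. fst (s (Inl (Suc k)))
    \<le> fst (urn_of_past k s) / (fst (urn_of_past k s) + snd (urn_of_past k s))"
  have step: "(\<lambda>s. fst (urn_of_past (Suc k) s)) =
      (\<lambda>s. if ?draw_X s then fst (urn_of_past k s) + q\<mu> (fst (s (Inr (Suc k))))
            else fst (urn_of_past k s))"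
       "(\<lambda>s. snd (urn_of_past (Suc k) s)) =
      (\<lambda>s. if ?draw_X s then snd (urn_of_past k s)
            else snd (urn_of_past k s) + q\<nu> (snd (s (Inr (Suc k)))))"
    unfolding urn_of_past_def by (simp_all add: Let_def)
  have "(\<lambda>s. fst (urn_of_past (Suc k) s)) \<in> borel_measurable (past_space n)"
    unfolding step by measurable
  moreover have "(\<lambda>s. snd (urn_of_past (Suc k) s)) \<in> borel_measurable (past_space n)"
    unfolding step by measurable
  ultimately show ?case ..
qed

lemma AE_reinforcements_in_Icc:
  "AE \<omega> in M. q\<mu> (V j \<omega>) \<in> {0..\<beta>} \<and> q\<nu> (W j \<omega>) \<in> {0..\<beta>}"
  using uniform_var_le_1[OF V_unif measurable_UVW(2), of j]
    uniform_var_le_1[OF W_unif measurable_UVW(3), of j]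
proof eventually_elim
  case (elim \<omega>)
  show ?case using quantile_in_Icc[OF \<mu> elim(1)] quantile_in_Icc[OF \<nu> elim(2)] by simp
qed

text \<open>The event on which every reinforcement is a genuine quantile value; off it the
  quantile function returns its junk value Inf {}.\<close>

lemma AE_all_VW_le_1: "AE \<omega> in M. \<forall>j. V j \<omega> \<le> 1 \<and> W j \<omega> \<le> 1"
  unfolding AE_all_countable
  using uniform_var_le_1[OF V_unif measurable_UVW(2)] uniform_var_le_1[OF W_unif measurable_UVW(3)]
  by (auto intro: eventually_conj)

lemma urnX_Suc: "urnX (Suc k) \<omega> = urnX k \<omega> + rru_indicator \<mu> \<nu> x y U V W (Suc k) \<omega> * q\<mu> (V (Suc k) \<omega>)"
  unfolding urnX_def rru_path_def rru_indicator_def by (rule fst_rru_Suc)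

lemma urnY_Suc:
  "urnY (Suc k) \<omega> = urnY k \<omega> + (1 - rru_indicator \<mu> \<nu> x y U V W (Suc k) \<omega>) * q\<nu> (W (Suc k) \<omega>)"
  unfolding urnY_def rru_path_def rru_indicator_def by (rule snd_rru_Suc)

lemma urn_nonneg_total_ge:
  assumes "\<forall>j. V j \<omega> \<le> 1 \<and> W j \<omega> \<le> 1"
  shows "0 \<le> urnX n \<omega> \<and> 0 \<le> urnY n \<omega> \<and> x + y \<le> urnX n \<omega> + urnY n \<omega>"
proof (induction n)
  case 0 then show ?case using xy by (simp add: urnX_def urnY_def rru_path_def)
next
  case (Suc n)
  have "0 \<le> q\<mu> (V (Suc n) \<omega>)" "0 \<le> q\<nu> (W (Suc n) \<omega>)"
    using assms quantile_in_Icc[OF \<mu>] quantile_in_Icc[OF \<nu>] by auto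
  moreover have "rru_indicator \<mu> \<nu> x y U V W (Suc n) \<omega> \<in> {0, 1}"
    unfolding rru_indicator_def by (rule rru_ind_01)
  ultimately show ?case using Suc unfolding urnX_Suc urnY_Suc by auto
qed

lemma urnZ_in_01:
  assumes "\<forall>j. V j \<omega> \<le> 1 \<and> W j \<omega> \<le> 1"
  shows "urnZ n \<omega> \<in> {0..1}"
  using urn_nonneg_total_ge[OF assms, of n] xy by (auto simp: urnZ_def divide_le_eq_1)

lemma urn_eq_urn_of_past:
  "urnX k \<omega> = fst (urn_of_past k (past k \<omega>))" "urnY k \<omega> = snd (urn_of_past k (past k \<omega>))"
  unfolding urnX_def urnY_def using rru_path_eq_urn_of_past[of k k \<omega>] by auto

lemma measurable_urn[measurable]:
  "urnX n \<in> borel_measurable M" "urnY n \<in> borel_measurable M" "urnZ n \<in> borel_measurable M"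
proof -
  have [measurable]: "(\<lambda>s. fst (urn_of_past n s)) \<in> borel_measurable (past_space n)"
    "(\<lambda>s. snd (urn_of_past n s)) \<in> borel_measurable (past_space n)"
    using measurable_urn_of_past[of n n] by auto
  show X: "urnX n \<in> borel_measurable M" and Y: "urnY n \<in> borel_measurable M"
    unfolding urn_eq_urn_of_past[abs_def] by measurable
  show "urnZ n \<in> borel_measurable M" unfolding urnZ_def[abs_def] using X Y by measurable
qed

lemma integrable_inverse_total: "integrable M (\<lambda>\<omega>. 1 / (urnX n \<omega> + urnY n \<omega>))"
proof (rule integrable_const_bound[of _ "1 / (x + y)"])
  show "AE \<omega> in M. norm (1 / (urnX n \<omega> + urnY n \<omega>)) \<le> 1 / (x + y)"
    using AE_all_VW_le_1 by eventually_elim (use urn_nonneg_total_ge xy in \<open>auto simp: frac_le\<close>)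
qed simp

lemma integrable_urnZ_increment: "integrable M (\<lambda>\<omega>. urnZ (Suc n) \<omega> - urnZ n \<omega>)"
proof (rule integrable_const_bound[of _ 1])
  show "AE \<omega> in M. norm (urnZ (Suc n) \<omega> - urnZ n \<omega>) \<le> 1"
    using AE_all_VW_le_1
  proof eventually_elim
    case (elim \<omega>)
    then show ?case using urnZ_in_01[OF elim, of n] urnZ_in_01[OF elim, of "Suc n"] by auto
  qed
qed simp

definition "urn_step n X Y t = (if fst (t (Inl (Suc n))) \<le> X / (X + Y)
   then (X + q\<mu> (fst (t (Inr (Suc n)))), Y) else (X, Y + q\<nu> (snd (t (Inr (Suc n))))))"
definition "ratio_change n X Y t =
  fst (urn_step n X Y t) / (fst (urn_step n X Y t) + snd (urn_step n X Y t)) - X / (X + Y)"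
definition "inverse_total_change n X Y t =
  1 / (X + Y) - 1 / (fst (urn_step n X Y t) + snd (urn_step n X Y t))"

definition "drift n X Y = (\<integral>\<omega>. ratio_change n X Y (next_draws n \<omega>) \<partial>M)"
definition "inverse_total_drift n X Y = (\<integral>\<omega>. inverse_total_change n X Y (next_draws n \<omega>) \<partial>M)"

lemma urn_Suc_eq_urn_step:
  "rru_path \<mu> \<nu> x y U V W (Suc n) \<omega> = urn_step n (urnX n \<omega>) (urnY n \<omega>) (next_draws n \<omega>)"
  unfolding urn_step_def next_draws_Inl next_draws_Inr urnX_def urnY_def
  by (simp add: rru_path_def Let_def)

lemma urnZ_increment: "urnZ (Suc n) \<omega> - urnZ n \<omega> = ratio_change n (urnX n \<omega>) (urnY n \<omega>) (next_draws n \<omega>)"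
  unfolding urnZ_def ratio_change_def urnX_def[of "Suc n"] urnY_def[of "Suc n"] urn_Suc_eq_urn_step ..

lemma inverse_total_increment:
  "1 / (urnX n \<omega> + urnY n \<omega>) - 1 / (urnX (Suc n) \<omega> + urnY (Suc n) \<omega>)
     = inverse_total_change n (urnX n \<omega>) (urnY n \<omega>) (next_draws n \<omega>)"
  unfolding inverse_total_change_def urnX_def[of "Suc n"] urnY_def[of "Suc n"] urn_Suc_eq_urn_step ..

lemma measurable_changes:
  "(\<lambda>p. ratio_change n (fst (urn_of_past n (fst p))) (snd (urn_of_past n (fst p))) (snd p))
     \<in> borel_measurable (past_space n \<Otimes>\<^sub>M next_space n)" (is "?ratio \<in> _")
  "(\<lambda>p. inverse_total_change n (fst (urn_of_past n (fst p))) (snd (urn_of_past n (fst p))) (snd p))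
     \<in> borel_measurable (past_space n \<Otimes>\<^sub>M next_space n)" (is "?inverse \<in> _")
proof -
  have [measurable]: "(\<lambda>s. fst (urn_of_past n s)) \<in> borel_measurable (past_space n)"
    "(\<lambda>s. snd (urn_of_past n s)) \<in> borel_measurable (past_space n)"
    using measurable_urn_of_past[of n n] by auto
  show "?ratio \<in> borel_measurable (past_space n \<Otimes>\<^sub>M next_space n)"
    unfolding ratio_change_def urn_step_def by measurable
  show "?inverse \<in> borel_measurable (past_space n \<Otimes>\<^sub>M next_space n)"
    unfolding inverse_total_change_def urn_step_def by measurable
qed

lemma measurable_drift[measurable]:
  "(\<lambda>p. drift n (fst p) (snd p)) \<in> borel_measurable (borel :: (real \<times> real) measure)"
  unfolding drift_def
  by (rule borel_measurable_lebesgue_integral) (unfold ratio_change_def urn_step_def, measurable)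

definition "observed = {rru_indicator \<mu> \<nu> x y U V W, \<lambda>n \<omega>. q\<mu> (V n \<omega>), \<lambda>n \<omega>. q\<nu> (W n \<omega>)}"
definition "observed_events n = (\<Union>j\<in>{1..n}. \<Union>f\<in>observed. {f j -` B \<inter> space M | B. B \<in> sets borel})"
definition "urn_filtration n = gen_filtration M observed n"

lemma sets_urn_filtration: "sets (urn_filtration n) = sigma_sets (space M) (observed_events n)"
  unfolding urn_filtration_def gen_filtration_def observed_events_def[symmetric]
  by (rule sets_measure_of) (auto simp: observed_events_def)

lemma space_urn_filtration: "space (urn_filtration n) = space M"
  unfolding urn_filtration_def gen_filtration_def by (rule space_measure_of_conv)

lemma observed_function_of_past:
  assumes "f \<in> observed" "1 \<le> j" "j \<le> n"
  obtains h where "h \<in> borel_measurable (past_space n)" "\<And>\<omega>. f j \<omega> = h (past n \<omega>)"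
proof -
  have [measurable]: "(\<lambda>s. s (Inl j)) \<in> measurable (past_space n) borel"
    "(\<lambda>s. s (Inr j)) \<in> measurable (past_space n) borel"
    using assms(3) by (rule measurable_past_component)+
  consider "f = rru_indicator \<mu> \<nu> x y U V W" | "f = (\<lambda>n \<omega>. q\<mu> (V n \<omega>))" | "f = (\<lambda>n \<omega>. q\<nu> (W n \<omega>))"
    using assms(1) unfolding observed_def by auto
  then show ?thesis
  proof cases
    case 1
    obtain k where k: "j = Suc k" using assms(2) by (cases j) auto
    have [measurable]: "(\<lambda>s. fst (urn_of_past k s)) \<in> borel_measurable (past_space n)"
      "(\<lambda>s. snd (urn_of_past k s)) \<in> borel_measurable (past_space n)"
      using measurable_urn_of_past[of k n] assms k by auto
    let ?h = "\<lambda>s. if fst (s (Inl j)) \<le> fst (urn_of_past k s) / (fst (urn_of_past k s) + snd (urn_of_past k s))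
                  then 1 else (0::real)"
    have "f j \<omega> = ?h (past n \<omega>)" for \<omega>
      using rru_indicator_eq_past[OF assms(3), of \<omega>]
      unfolding 1 k by (simp add: rru_ind_def urn_of_past_def Let_def)
    then show ?thesis by (intro that[of ?h]) measurable
  next
    case 2
    then show ?thesis using past_Inr[OF assms(3)] by (intro that[of "\<lambda>s. q\<mu> (fst (s (Inr j)))"]) auto
  next
    case 3
    then show ?thesis using past_Inr[OF assms(3)] by (intro that[of "\<lambda>s. q\<nu> (snd (s (Inr j)))"]) auto
  qed
qed

lemma sets_urn_filtration_vimage_past:
  "sets (urn_filtration n) \<subseteq> {past n -` C \<inter> space M | C. C \<in> sets (past_space n)}"
proof -
  have "observed_events n \<subseteq> {past n -` C \<inter> space M | C. C \<in> sets (past_space n)}"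
  proof
    fix A assume "A \<in> observed_events n"
    then obtain j f B where jf: "j \<in> {1..n}" "f \<in> observed" "B \<in> sets borel"
      and A: "A = f j -` B \<inter> space M"
      unfolding observed_events_def by blast
    obtain h where h: "h \<in> borel_measurable (past_space n)" "\<And>\<omega>. f j \<omega> = h (past n \<omega>)"
      using observed_function_of_past[OF jf(2)] jf(1) by auto
    have "A = past n -` (h -` B \<inter> space (past_space n)) \<inter> space M"
      unfolding A h(2) using measurable_space[OF measurable_past] by blast
    moreover have "h -` B \<inter> space (past_space n) \<in> sets (past_space n)"
      using h(1) jf(3) by (rule measurable_sets)
    ultimately show "A \<in> {past n -` C \<inter> space M | C. C \<in> sets (past_space n)}" by blast
  qed
  then have "sets (urn_filtration n) \<subseteq>
      sigma_sets (space M) {past n -` C \<inter> space M | C. C \<in> sets (past_space n)}"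
    unfolding sets_urn_filtration by (rule sigma_sets_subseteq)
  also have "\<dots> = sets (vimage_algebra (space M) (past n) (past_space n))"
    by (rule sets_vimage_algebra[symmetric])
  also have "\<dots> = {past n -` C \<inter> space M | C. C \<in> sets (past_space n)}"
    by (rule sets_vimage_algebra2) (use measurable_space[OF measurable_past] in auto)
  finally show ?thesis .
qed

lemma subalgebra_urn_filtration: "subalgebra M (urn_filtration n)"
  unfolding subalgebra_def space_urn_filtration
  using sets_urn_filtration_vimage_past[of n] measurable_sets[OF measurable_past] by blast

lemma measurable_urn_filtration_Suc:
  "f \<in> borel_measurable (urn_filtration k) \<Longrightarrow> f \<in> borel_measurable (urn_filtration (Suc k))"
proof -
  have "sets (urn_filtration k) \<subseteq> sets (urn_filtration (Suc k))"
    unfolding sets_urn_filtration observed_events_def by (rule sigma_sets_subseteq, rule UN_mono) auto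
  then show "f \<in> borel_measurable (urn_filtration k) \<Longrightarrow> f \<in> borel_measurable (urn_filtration (Suc k))"
    unfolding measurable_def space_urn_filtration by auto
qed

lemma measurable_observed:
  assumes "f \<in> observed" "1 \<le> j" "j \<le> n"
  shows "f j \<in> borel_measurable (urn_filtration n)"
proof (rule measurableI)
  fix B :: "real set" assume "B \<in> sets borel"
  then have "f j -` B \<inter> space M \<in> observed_events n" unfolding observed_events_def using assms
    by (intro UN_I[of j] UN_I[of f]) auto
  then show "f j -` B \<inter> space (urn_filtration n) \<in> sets (urn_filtration n)"
    unfolding sets_urn_filtration space_urn_filtration by auto
qed (simp add: space_urn_filtration)

lemma urn_adapted:
  "k \<le> n \<Longrightarrow> urnX k \<in> borel_measurable (urn_filtration n) \<and> urnY k \<in> borel_measurable (urn_filtration n)"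
proof (induction k)
  case 0
  have "urnX 0 = (\<lambda>_. x)" "urnY 0 = (\<lambda>_. y)" by (auto simp: urnX_def urnY_def rru_path_def)
  then show ?case by simp
next
  case (Suc k)
  then have [measurable]:
    "urnX k \<in> borel_measurable (urn_filtration n)" "urnY k \<in> borel_measurable (urn_filtration n)"
    by auto
  have [measurable]: "rru_indicator \<mu> \<nu> x y U V W (Suc k) \<in> borel_measurable (urn_filtration n)"
    "(\<lambda>\<omega>. q\<mu> (V (Suc k) \<omega>)) \<in> borel_measurable (urn_filtration n)"
    "(\<lambda>\<omega>. q\<nu> (W (Suc k) \<omega>)) \<in> borel_measurable (urn_filtration n)"
    using measurable_observed[of _ "Suc k" n] Suc.prems by (auto simp: observed_def)
  have "urnX (Suc k) \<in> borel_measurable (urn_filtration n)" unfolding urnX_Suc[abs_def] by measurable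
  moreover have "urnY (Suc k) \<in> borel_measurable (urn_filtration n)"
    unfolding urnY_Suc[abs_def] by measurable
  ultimately show ?case ..
qed

lemma measurable_drift_urn_filtration:
  "(\<lambda>\<omega>. drift n (urnX n \<omega>) (urnY n \<omega>)) \<in> borel_measurable (urn_filtration n)"
proof -
  have [measurable]:
    "urnX n \<in> borel_measurable (urn_filtration n)" "urnY n \<in> borel_measurable (urn_filtration n)"
    using urn_adapted[of n n] by auto
  have "(\<lambda>\<omega>. (urnX n \<omega>, urnY n \<omega>)) \<in> measurable (urn_filtration n) (borel \<Otimes>\<^sub>M borel)" by measurable
  then have "(\<lambda>\<omega>. (urnX n \<omega>, urnY n \<omega>)) \<in> measurable (urn_filtration n) borel" unfolding borel_prod .
  from measurable_compose[OF this measurable_drift] show ?thesis by (simp add: o_def)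
qed

lemma integral_choice_times_reinforcement:
  fixes h :: "real \<times> real \<Rightarrow> real"
  assumes z: "0 \<le> z" "z \<le> 1" and [measurable]: "h \<in> borel_measurable borel"
    and int: "integrable M (\<lambda>\<omega>. h (V j \<omega>, W j \<omega>))"
  shows "integrable M (\<lambda>\<omega>. indicator {..z} (U j \<omega>) * h (V j \<omega>, W j \<omega>))"
    and "(\<integral>\<omega>. indicator {..z} (U j \<omega>) * h (V j \<omega>, W j \<omega>) \<partial>M) = z * (\<integral>\<omega>. h (V j \<omega>, W j \<omega>) \<partial>M)"
proof -
  have i: "indep_var (PiM {Inl j} (\<lambda>_. borel)) (\<lambda>\<omega>. restrict (\<lambda>i. draw i \<omega>) {Inl j})
                  (PiM {Inr j} (\<lambda>_. borel)) (\<lambda>\<omega>. restrict (\<lambda>i. draw i \<omega>) {Inr j})"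
    by (rule indep_var_restrict[OF indep[folded draw_def]]) auto
  have m1: "(\<lambda>s. indicator {..z} (fst (s (Inl j))) :: real)
      \<in> borel_measurable (PiM {Inl j} (\<lambda>_. borel :: (real \<times> real) measure))"
    by measurable
  have m2: "(\<lambda>s. h (s (Inr j))) \<in> borel_measurable (PiM {Inr j} (\<lambda>_. borel :: (real \<times> real) measure))"
    by measurable
  from indep_var_compose[OF i m1 m2]
  have ind: "indep_var borel (\<lambda>\<omega>. indicator {..z} (U j \<omega>) :: real) borel (\<lambda>\<omega>. h (V j \<omega>, W j \<omega>))"
    by (simp add: o_def draw_def)
  have int_ind: "integrable M (\<lambda>\<omega>. indicator {..z} (U j \<omega>) :: real)"
    by (intro integrable_const_bound[of _ 1]) auto
  show "integrable M (\<lambda>\<omega>. indicator {..z} (U j \<omega>) * h (V j \<omega>, W j \<omega>))"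
    by (rule indep_var_integrable[OF ind int_ind int])
  show "(\<integral>\<omega>. indicator {..z} (U j \<omega>) * h (V j \<omega>, W j \<omega>) \<partial>M) = z * (\<integral>\<omega>. h (V j \<omega>, W j \<omega>) \<partial>M)"
    using indep_var_lebesgue_integral[OF ind int_ind int]
      prob_uniform_var_le[OF U_unif measurable_UVW(1) z]
    by simp
qed

definition "gainX n D = (\<integral>\<omega>. q\<mu> (V (Suc n) \<omega>) / (D + q\<mu> (V (Suc n) \<omega>)) \<partial>M)"
definition "gainY n D = (\<integral>\<omega>. q\<nu> (W (Suc n) \<omega>) / (D + q\<nu> (W (Suc n) \<omega>)) \<partial>M)"

lemma gain_bounds:
  assumes "0 < D"
  shows "integrable M (\<lambda>\<omega>. q\<mu> (V (Suc n) \<omega>) / (D + q\<mu> (V (Suc n) \<omega>)))"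
    and "integrable M (\<lambda>\<omega>. q\<nu> (W (Suc n) \<omega>) / (D + q\<nu> (W (Suc n) \<omega>)))"
    and "(\<integral>k. k \<partial>\<mu>) / (D + \<beta>) \<le> gainX n D" "gainX n D \<le> (\<integral>k. k \<partial>\<mu>) / D"
    and "(\<integral>k. k \<partial>\<mu>) / (D + \<beta>) \<le> gainY n D" "gainY n D \<le> (\<integral>k. k \<partial>\<mu>) / D"
proof -
  have AE_V: "AE \<omega> in M. 0 \<le> q\<mu> (V (Suc n) \<omega>) \<and> q\<mu> (V (Suc n) \<omega>) \<le> \<beta>"
   and AE_W: "AE \<omega> in M. 0 \<le> q\<nu> (W (Suc n) \<omega>) \<and> q\<nu> (W (Suc n) \<omega>) \<le> \<beta>"
    using AE_reinforcements_in_Icc[of "Suc n"] by (auto elim!: eventually_mono)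
  have mean_V: "(\<integral>\<omega>. q\<mu> (V (Suc n) \<omega>) \<partial>M) = (\<integral>k. k \<partial>\<mu>)"
    by (rule integral_quantile_uniform_var[OF \<mu> V_unif measurable_UVW(2)])
  have mean_W: "(\<integral>\<omega>. q\<nu> (W (Suc n) \<omega>) \<partial>M) = (\<integral>k. k \<partial>\<mu>)"
    using integral_quantile_uniform_var[OF \<nu> W_unif measurable_UVW(3)] equal_means by simp
  note V = integral_ratio_bounds[OF _ AE_V assms, unfolded mean_V, folded gainX_def]
  note W = integral_ratio_bounds[OF _ AE_W assms, unfolded mean_W, folded gainY_def]
  show "integrable M (\<lambda>\<omega>. q\<mu> (V (Suc n) \<omega>) / (D + q\<mu> (V (Suc n) \<omega>)))"
    "(\<integral>k. k \<partial>\<mu>) / (D + \<beta>) \<le> gainX n D" "gainX n D \<le> (\<integral>k. k \<partial>\<mu>) / D"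
    using V by simp_all
  show "integrable M (\<lambda>\<omega>. q\<nu> (W (Suc n) \<omega>) / (D + q\<nu> (W (Suc n) \<omega>)))"
    "(\<integral>k. k \<partial>\<mu>) / (D + \<beta>) \<le> gainY n D" "gainY n D \<le> (\<integral>k. k \<partial>\<mu>) / D"
    using W by simp_all
qed

lemma changes_on_step:
  fixes X Y :: real and n :: nat and \<omega> :: 'a
  defines "z \<equiv> X / (X + Y)"
    and "cX \<equiv> q\<mu> (V (Suc n) \<omega>) / (X + Y + q\<mu> (V (Suc n) \<omega>))"
    and "cY \<equiv> q\<nu> (W (Suc n) \<omega>) / (X + Y + q\<nu> (W (Suc n) \<omega>))"
  assumes XY: "0 < X + Y" and R: "0 \<le> q\<mu> (V (Suc n) \<omega>)" "0 \<le> q\<nu> (W (Suc n) \<omega>)"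
  shows "ratio_change n X Y (next_draws n \<omega>)
           = indicator {..z} (U (Suc n) \<omega>) * ((1 - z) * cX + z * cY) - z * cY" (is ?ratio)
    and "inverse_total_change n X Y (next_draws n \<omega>)
           = (indicator {..z} (U (Suc n) \<omega>) * (cX - cY) + cY) / (X + Y)" (is ?inverse)
proof -
  have "?ratio \<and> ?inverse"
  proof (cases "U (Suc n) \<omega> \<le> z")
    case True
    then have "urn_step n X Y (next_draws n \<omega>) = (X + q\<mu> (V (Suc n) \<omega>), Y)"
      by (simp add: urn_step_def next_draws_Inl next_draws_Inr z_def)
    then show ?thesis
      using True reinforcement_step_identities(1,2)[OF R(1) XY]
      by (simp add: ratio_change_def inverse_total_change_def cX_def z_def)
  next
    case False
    then have "urn_step n X Y (next_draws n \<omega>) = (X, Y + q\<nu> (W (Suc n) \<omega>))"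
      by (simp add: urn_step_def next_draws_Inl next_draws_Inr z_def)
    then show ?thesis
      using False reinforcement_step_identities(3,4)[OF R(2) XY]
      by (simp add: ratio_change_def inverse_total_change_def cY_def z_def)
  qed
  then show ?ratio and ?inverse by blast+
qed

lemma drift_formulas:
  fixes X Y :: real
  defines "z \<equiv> X / (X + Y)"
  assumes XY: "0 \<le> X" "0 \<le> Y" "0 < X + Y"
  shows "drift n X Y = z * (1 - z) * (gainX n (X + Y) - gainY n (X + Y))"
    and "inverse_total_drift n X Y = (z * gainX n (X + Y) + (1 - z) * gainY n (X + Y)) / (X + Y)"
proof -
  have z: "0 \<le> z" "z \<le> 1" using XY by (auto simp: z_def)
  define cX where "cX p = q\<mu> (fst p) / (X + Y + q\<mu> (fst p))" for p :: "real \<times> real"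
  define cY where "cY p = q\<nu> (snd p) / (X + Y + q\<nu> (snd p))" for p :: "real \<times> real"
  have [measurable]: "cX \<in> borel_measurable borel" unfolding cX_def[abs_def] by measurable
  have [measurable]: "cY \<in> borel_measurable borel" unfolding cY_def[abs_def] by measurable
  have [measurable]: "(\<lambda>\<omega>. ratio_change n X Y (next_draws n \<omega>)) \<in> borel_measurable M"
    unfolding ratio_change_def urn_step_def next_draws_Inl next_draws_Inr by measurable
  have [measurable]: "(\<lambda>\<omega>. inverse_total_change n X Y (next_draws n \<omega>)) \<in> borel_measurable M"
    unfolding inverse_total_change_def urn_step_def next_draws_Inl next_draws_Inr by measurable
  let ?I = "\<lambda>\<omega>. indicator {..z} (U (Suc n) \<omega>)"
  let ?a = "\<lambda>\<omega>. cX (V (Suc n) \<omega>, W (Suc n) \<omega>)" and ?b = "\<lambda>\<omega>. cY (V (Suc n) \<omega>, W (Suc n) \<omega>)"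
  have int_ab: "integrable M ?a" "integrable M ?b"
    using gain_bounds(1,2)[of "X + Y" n] XY by (simp_all add: cX_def cY_def)
  have gains: "(\<integral>\<omega>. ?a \<omega> \<partial>M) = gainX n (X + Y)" "(\<integral>\<omega>. ?b \<omega> \<partial>M) = gainY n (X + Y)"
    by (simp_all add: cX_def cY_def gainX_def gainY_def)
  have AE_changes: "AE \<omega> in M.
      ratio_change n X Y (next_draws n \<omega>) = ?I \<omega> * ((1 - z) * ?a \<omega> + z * ?b \<omega>) - z * ?b \<omega> \<and>
      inverse_total_change n X Y (next_draws n \<omega>) = (?I \<omega> * (?a \<omega> - ?b \<omega>) + ?b \<omega>) / (X + Y)"
    using AE_reinforcements_in_Icc[of "Suc n"]
  proof eventually_elim
    case (elim \<omega>)
    then have "0 \<le> q\<mu> (V (Suc n) \<omega>)" "0 \<le> q\<nu> (W (Suc n) \<omega>)" by auto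
    from changes_on_step[OF XY(3) this] show ?case by (simp only: cX_def cY_def z_def prod.sel)
  qed
  have "drift n X Y = (\<integral>\<omega>. ?I \<omega> * ((1 - z) * ?a \<omega> + z * ?b \<omega>) - z * ?b \<omega> \<partial>M)"
    unfolding drift_def
    by (rule integral_cong_AE) (measurable, use AE_changes in \<open>auto elim!: eventually_mono\<close>)
  also have "\<dots> = z * ((1 - z) * gainX n (X + Y) + z * gainY n (X + Y)) - z * gainY n (X + Y)"
    using integral_choice_times_reinforcement[OF z, of "\<lambda>p. (1 - z) * cX p + z * cY p" "Suc n"]
      int_ab gains by simp
  finally show "drift n X Y = z * (1 - z) * (gainX n (X + Y) - gainY n (X + Y))"
    by (simp add: algebra_simps)
  have "inverse_total_drift n X Y = (\<integral>\<omega>. (?I \<omega> * (?a \<omega> - ?b \<omega>) + ?b \<omega>) / (X + Y) \<partial>M)"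
    unfolding inverse_total_drift_def
    by (rule integral_cong_AE) (measurable, use AE_changes in \<open>auto elim!: eventually_mono\<close>)
  also have "\<dots> = (z * (gainX n (X + Y) - gainY n (X + Y)) + gainY n (X + Y)) / (X + Y)"
    using integral_choice_times_reinforcement[OF z, of "\<lambda>p. cX p - cY p" "Suc n"] int_ab gains by simp
  finally show "inverse_total_drift n X Y = (z * gainX n (X + Y) + (1 - z) * gainY n (X + Y)) / (X + Y)"
    by (simp add: algebra_simps)
qed

lemma mean_nonneg: "0 \<le> (\<integral>k. k \<partial>\<mu>)"
proof -
  have "0 \<le> (\<integral>\<omega>. q\<mu> (V 0 \<omega>) \<partial>M)"
    using AE_reinforcements_in_Icc[of 0] by (intro integral_nonneg_AE) (auto elim!: eventually_mono)
  then show ?thesis unfolding integral_quantile_uniform_var[OF \<mu> V_unif measurable_UVW(2)] .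
qed

lemma drift_bound:
  assumes XY: "0 \<le> X" "0 \<le> Y" "0 < X + Y"
  shows "0 \<le> inverse_total_drift n X Y" and "\<bar>drift n X Y\<bar> \<le> \<beta> / 4 * inverse_total_drift n X Y"
proof -
  have z: "0 \<le> X / (X + Y)" "X / (X + Y) \<le> 1" using XY by auto
  note bound = abs_drift_le_inverse_drift[OF z XY(3) distribution_on_Icc_nonneg[OF \<mu>] mean_nonneg
      gain_bounds(3-6)[OF XY(3), of n]]
  show "0 \<le> inverse_total_drift n X Y" "\<bar>drift n X Y\<bar> \<le> \<beta> / 4 * inverse_total_drift n X Y"
    unfolding drift_formulas[OF XY] by (fact bound(1), fact bound(2))
qed

text \<open>Conditioning on the past: the next draws are independent of it, so averaging over them
  turns the actual increments into their drifts.\<close>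

lemma integral_past_event_urnZ_increment:
  assumes C[measurable]: "C \<in> sets (past_space n)"
  defines "B \<equiv> past n -` C \<inter> space M"
  shows "(\<integral>\<omega>. indicator B \<omega> * (urnZ (Suc n) \<omega> - urnZ n \<omega>) \<partial>M) =
         (\<integral>\<omega>. indicator B \<omega> * drift n (urnX n \<omega>) (urnY n \<omega>) \<partial>M)"
    and "integrable M (\<lambda>\<omega>. indicator B \<omega> * drift n (urnX n \<omega>) (urnY n \<omega>))"
proof -
  have [measurable]: "B \<in> sets M" unfolding B_def using measurable_sets[OF measurable_past C] .
  define f where "f p = indicator C (fst p) *
      ratio_change n (fst (urn_of_past n (fst p))) (snd (urn_of_past n (fst p))) (snd p)" for p
  note measurable_changes(1)[measurable]
  have f_meas: "f \<in> borel_measurable (past_space n \<Otimes>\<^sub>M next_space n)"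
    unfolding f_def[abs_def] by measurable
  have f_actual: "f (past n \<omega>, next_draws n \<omega>) = indicator B \<omega> * (urnZ (Suc n) \<omega> - urnZ n \<omega>)"
    if "\<omega> \<in> space M" for \<omega>
    using that by (simp add: f_def B_def urnZ_increment urn_eq_urn_of_past indicator_def)
  have f_mean:
    "(\<integral>\<omega>'. f (past n \<omega>, next_draws n \<omega>') \<partial>M) = indicator B \<omega> * drift n (urnX n \<omega>) (urnY n \<omega>)"
    if "\<omega> \<in> space M" for \<omega>
    using that by (simp add: f_def B_def drift_def urn_eq_urn_of_past indicator_def)
  have "integrable M (\<lambda>\<omega>. indicator B \<omega> * (urnZ (Suc n) \<omega> - urnZ n \<omega>))"
    using integrable_mult_indicator[OF _ integrable_urnZ_increment, of B n] by simp
  then have f_int: "integrable M (\<lambda>\<omega>. f (past n \<omega>, next_draws n \<omega>))"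
    using f_actual by (subst Bochner_Integration.integrable_cong[OF refl]) auto
  note iterated = indep_var_integral_iterated[OF indep_past_next_draws f_meas f_int]
  show "(\<integral>\<omega>. indicator B \<omega> * (urnZ (Suc n) \<omega> - urnZ n \<omega>) \<partial>M) =
        (\<integral>\<omega>. indicator B \<omega> * drift n (urnX n \<omega>) (urnY n \<omega>) \<partial>M)"
    using iterated(1) f_actual f_mean by (simp cong: Bochner_Integration.integral_cong)
  show "integrable M (\<lambda>\<omega>. indicator B \<omega> * drift n (urnX n \<omega>) (urnY n \<omega>))"
    using iterated(2) f_mean by (subst (asm) Bochner_Integration.integrable_cong[OF refl]) auto
qed

lemma cond_exp_urnZ_increment:
  "AE \<omega> in M. real_cond_exp M (urn_filtration n) (\<lambda>\<omega>. urnZ (Suc n) \<omega> - urnZ n \<omega>) \<omega>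
                = drift n (urnX n \<omega>) (urnY n \<omega>)"
proof -
  interpret S: finite_measure_subalgebra M "urn_filtration n"
    by unfold_locales (rule subalgebra_urn_filtration)
  have "integrable M (\<lambda>\<omega>. indicator (past n -` space (past_space n) \<inter> space M) \<omega> * drift n (urnX n \<omega>) (urnY n \<omega>))"
    by (rule integral_past_event_urnZ_increment(2)) simp
  then have drift_int: "integrable M (\<lambda>\<omega>. drift n (urnX n \<omega>) (urnY n \<omega>))"
    using measurable_space[OF measurable_past] by (subst (asm) Bochner_Integration.integrable_cong[OF refl]) auto
  show ?thesis
  proof (rule S.real_cond_exp_charact)
    fix B assume "B \<in> sets (urn_filtration n)"
    then obtain C where "C \<in> sets (past_space n)" "B = past n -` C \<inter> space M"
      using sets_urn_filtration_vimage_past[of n] by blast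
    then show "(\<integral>\<omega>\<in>B. urnZ (Suc n) \<omega> - urnZ n \<omega> \<partial>M) = (\<integral>\<omega>\<in>B. drift n (urnX n \<omega>) (urnY n \<omega>) \<partial>M)"
      unfolding set_lebesgue_integral_def using integral_past_event_urnZ_increment(1) by simp
  qed (use integrable_urnZ_increment drift_int measurable_drift_urn_filtration in auto)
qed

lemma integral_inverse_total_drift:
  "integrable M (\<lambda>\<omega>. inverse_total_drift n (urnX n \<omega>) (urnY n \<omega>))"
  "(\<integral>\<omega>. inverse_total_drift n (urnX n \<omega>) (urnY n \<omega>) \<partial>M) =
     (\<integral>\<omega>. 1 / (urnX n \<omega> + urnY n \<omega>) \<partial>M) - (\<integral>\<omega>. 1 / (urnX (Suc n) \<omega> + urnY (Suc n) \<omega>) \<partial>M)"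
proof -
  define f where
    "f p = inverse_total_change n (fst (urn_of_past n (fst p))) (snd (urn_of_past n (fst p))) (snd p)" for p
  have f_meas: "f \<in> borel_measurable (past_space n \<Otimes>\<^sub>M next_space n)"
    using measurable_changes(2)[of n] by (simp add: f_def[abs_def])
  have f_actual: "f (past n \<omega>, next_draws n \<omega>)
      = 1 / (urnX n \<omega> + urnY n \<omega>) - 1 / (urnX (Suc n) \<omega> + urnY (Suc n) \<omega>)" for \<omega>
    unfolding inverse_total_increment by (simp add: f_def urn_eq_urn_of_past[of n])
  have f_mean:
    "(\<integral>\<omega>'. f (past n \<omega>, next_draws n \<omega>') \<partial>M) = inverse_total_drift n (urnX n \<omega>) (urnY n \<omega>)" for \<omega>
    by (simp add: f_def inverse_total_drift_def urn_eq_urn_of_past)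
  have f_int: "integrable M (\<lambda>\<omega>. f (past n \<omega>, next_draws n \<omega>))"
    unfolding f_actual using integrable_inverse_total[of n] integrable_inverse_total[of "Suc n"] by simp
  note iterated = indep_var_integral_iterated[OF indep_past_next_draws f_meas f_int]
  show "integrable M (\<lambda>\<omega>. inverse_total_drift n (urnX n \<omega>) (urnY n \<omega>))"
    using iterated(2) unfolding f_mean .
  show "(\<integral>\<omega>. inverse_total_drift n (urnX n \<omega>) (urnY n \<omega>) \<partial>M) =
     (\<integral>\<omega>. 1 / (urnX n \<omega> + urnY n \<omega>) \<partial>M) - (\<integral>\<omega>. 1 / (urnX (Suc n) \<omega> + urnY (Suc n) \<omega>) \<partial>M)"
    using iterated(1) integrable_inverse_total[of n] integrable_inverse_total[of "Suc n"]
    unfolding f_mean f_actual by simp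
qed

definition "mean_inverse_total n = (\<integral>\<omega>. 1 / (urnX n \<omega> + urnY n \<omega>) \<partial>M)"

lemma AE_drift_bound:
  "AE \<omega> in M. 0 \<le> inverse_total_drift n (urnX n \<omega>) (urnY n \<omega>) \<and>
     \<bar>drift n (urnX n \<omega>) (urnY n \<omega>)\<bar> \<le> \<beta> / 4 * inverse_total_drift n (urnX n \<omega>) (urnY n \<omega>)"
  using AE_all_VW_le_1
proof eventually_elim
  case (elim \<omega>)
  then show ?case using urn_nonneg_total_ge[OF elim, of n] xy drift_bound by simp
qed

lemma mean_inverse_total_Suc_le: "mean_inverse_total (Suc n) \<le> mean_inverse_total n"
proof -
  have "0 \<le> (\<integral>\<omega>. inverse_total_drift n (urnX n \<omega>) (urnY n \<omega>) \<partial>M)"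
    using AE_drift_bound by (intro integral_nonneg_AE) (auto elim!: eventually_mono)
  then show ?thesis unfolding mean_inverse_total_def integral_inverse_total_drift(2) by simp
qed

lemma mean_inverse_total_nonneg: "0 \<le> mean_inverse_total n"
proof -
  have "AE \<omega> in M. 0 \<le> 1 / (urnX n \<omega> + urnY n \<omega>)"
    using AE_all_VW_le_1 by eventually_elim (use urn_nonneg_total_ge xy in force)
  then show ?thesis unfolding mean_inverse_total_def by (simp add: integral_nonneg_AE)
qed

lemma mean_inverse_total_0: "mean_inverse_total 0 = 1 / (x + y)"
  by (simp add: mean_inverse_total_def urnX_def urnY_def rru_path_def prob_space)

lemma nn_integral_abs_drift_le:
  "(\<integral>\<^sup>+\<omega>. ennreal \<bar>drift n (urnX n \<omega>) (urnY n \<omega>)\<bar> \<partial>M)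
     \<le> ennreal (\<beta> / 4 * mean_inverse_total n - \<beta> / 4 * mean_inverse_total (Suc n))"
proof -
  have "(\<integral>\<^sup>+\<omega>. ennreal \<bar>drift n (urnX n \<omega>) (urnY n \<omega>)\<bar> \<partial>M)
      \<le> (\<integral>\<^sup>+\<omega>. ennreal (\<beta> / 4 * inverse_total_drift n (urnX n \<omega>) (urnY n \<omega>)) \<partial>M)"
    using AE_drift_bound[of n] by (intro nn_integral_mono_AE, eventually_elim) (simp add: ennreal_leI)
  also have "\<dots> = ennreal (\<integral>\<omega>. \<beta> / 4 * inverse_total_drift n (urnX n \<omega>) (urnY n \<omega>) \<partial>M)"
    using integral_inverse_total_drift(1)[of n] AE_drift_bound[of n] distribution_on_Icc_nonneg[OF \<mu>]
    by (intro nn_integral_eq_integral) (auto elim!: eventually_mono)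
  also have "\<dots> = ennreal (\<beta> / 4 * mean_inverse_total n - \<beta> / 4 * mean_inverse_total (Suc n))"
    by (simp add: mean_inverse_total_def integral_inverse_total_drift(2) right_diff_distrib diff_divide_distrib)
  finally show ?thesis .
qed

theorem nn_integral_SUP_predictable_le:
  fixes Mart A :: "nat \<Rightarrow> 'a \<Rightarrow> real"
  assumes mart: "martingale_wrt M urn_filtration Mart"
    and pred: "predictable_wrt urn_filtration A" and A0: "\<And>\<omega>. A 0 \<omega> = 0"
    and doob: "AE \<omega> in M. \<forall>n. urnZ n \<omega> = urnZ 0 \<omega> + Mart n \<omega> + A n \<omega>"
  shows "(\<integral>\<^sup>+\<omega>. (SUP r. ennreal \<bar>A r \<omega>\<bar>) \<partial>M) \<le> ennreal (\<beta> / 4 * (1 / (x + y)))"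
proof -
  have A_adapted: "A n \<in> borel_measurable (urn_filtration n)" for n
  proof (cases n)
    case 0
    have "A 0 = (\<lambda>_. 0)" using A0 by auto
    then show ?thesis using 0 by simp
  next
    case (Suc k)
    then show ?thesis using pred by (simp add: predictable_wrt_def measurable_urn_filtration_Suc)
  qed
  have A_meas: "A n \<in> borel_measurable M" for n
    by (rule measurable_from_subalg[OF subalgebra_urn_filtration A_adapted])
  have A_increment: "AE \<omega> in M. A (Suc n) \<omega> - A n \<omega> = drift n (urnX n \<omega>) (urnY n \<omega>)" for n
    using predictable_increment_eq_cond_exp[OF subalgebra_urn_filtration mart A_adapted
        pred[unfolded predictable_wrt_def, rule_format] integrable_urnZ_increment doob]
      cond_exp_urnZ_increment
    by eventually_elim (rule trans)
  define e where "e n = \<beta> / 4 * mean_inverse_total n" for n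
  have "(\<integral>\<^sup>+\<omega>. (SUP r. ennreal \<bar>A r \<omega>\<bar>) \<partial>M) \<le> (\<Sum>n. \<integral>\<^sup>+\<omega>. ennreal \<bar>A (Suc n) \<omega> - A n \<omega>\<bar> \<partial>M)"
    using A0 A_meas by (rule nn_integral_SUP_abs_le_suminf_increments)
  also have "\<dots> = (\<Sum>n. \<integral>\<^sup>+\<omega>. ennreal \<bar>drift n (urnX n \<omega>) (urnY n \<omega>)\<bar> \<partial>M)"
  proof (intro suminf_cong nn_integral_cong_AE)
    fix n
    show "AE \<omega> in M. ennreal \<bar>A (Suc n) \<omega> - A n \<omega>\<bar> = ennreal \<bar>drift n (urnX n \<omega>) (urnY n \<omega>)\<bar>"
      using A_increment[of n] by eventually_elim simp
  qed
  also have "\<dots> \<le> (\<Sum>n. ennreal (e n - e (Suc n)))"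
    unfolding e_def by (intro suminf_le nn_integral_abs_drift_le) auto
  also have "\<dots> \<le> ennreal (e 0)"
    using mean_inverse_total_Suc_le mean_inverse_total_nonneg distribution_on_Icc_nonneg[OF \<mu>]
    by (intro suminf_ennreal_telescope_le) (auto simp: e_def mult_left_mono)
  finally show ?thesis by (simp add: e_def mean_inverse_total_0)
qed

end

theorem lemmaA2:
  fixes m0 \<beta> :: real and \<mu> \<nu> :: "real measure" and x y :: real
    and M :: "'a measure" and U V W :: "nat \<Rightarrow> 'a \<Rightarrow> real"
    and Mart A :: "nat \<Rightarrow> 'a \<Rightarrow> real"
  defines "Z \<equiv> \<lambda>n \<omega>. fst (rru_path \<mu> \<nu> x y U V W n \<omega>) /
                       (fst (rru_path \<mu> \<nu> x y U V W n \<omega>) + snd (rru_path \<mu> \<nu> x y U V W n \<omega>))"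
      and "\<A> \<equiv> gen_filtration M {rru_indicator \<mu> \<nu> x y U V W,
                                 \<lambda>n \<omega>. quantile \<mu> (V n \<omega>), \<lambda>n \<omega>. quantile \<nu> (W n \<omega>)}"
  assumes m0: "0 < m0" "m0 \<le> \<beta>"
      and P: "pair_class m0 \<beta> \<mu> \<nu>"
      and S: "x \<ge> 0" "y \<ge> 0" "(x, y) \<noteq> (0, 0)"
      and prob: "prob_space M"
      and U_unif: "\<And>n. distr M borel (U n) = uniform_measure lborel {0..1}"
      and VW_ident: "\<And>n. distr M borel (\<lambda>\<omega>. (V n \<omega>, W n \<omega>)) = distr M borel (\<lambda>\<omega>. (V 0 \<omega>, W 0 \<omega>))"
      and V_unif: "\<And>n. distr M borel (V n) = uniform_measure lborel {0..1}"
      and W_unif: "\<And>n. distr M borel (W n) = uniform_measure lborel {0..1}"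
      and indep: "prob_space.indep_vars M (\<lambda>_. borel :: (real \<times> real) measure)
                    (case_sum (\<lambda>n \<omega>. (U n \<omega>, 0)) (\<lambda>n \<omega>. (V n \<omega>, W n \<omega>))) UNIV"
      and Mart: "martingale_wrt M \<A> Mart" "\<And>\<omega>. Mart 0 \<omega> = 0"
      and A_pred: "predictable_wrt \<A> A" "\<And>\<omega>. A 0 \<omega> = 0"
      and doob: "AE \<omega> in M. \<forall>n. Z n \<omega> = Z 0 \<omega> + Mart n \<omega> + A n \<omega>"
      and D0: "x + y \<ge> 2 * \<beta>"
  shows "(\<integral>\<^sup>+ \<omega>. (SUP r. ennreal \<bar>A r \<omega>\<bar>) \<partial>M) \<le> ennreal (\<beta> / (x + y))"
proof -
  have "0 < x + y" using S by (cases "x = 0") auto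
  moreover have "distribution_on_Icc \<beta> \<mu>" "distribution_on_Icc \<beta> \<nu>" "(\<integral>k. k \<partial>\<mu>) = (\<integral>k. k \<partial>\<nu>)"
    using P by (auto simp: pair_class_def distribution_on_Icc_def)
  ultimately interpret rru_model M \<mu> \<nu> \<beta> x y U V W
    unfolding rru_model_def rru_model_axioms_def using prob S(1,2) U_unif V_unif W_unif indep by blast
  have Z: "Z = urnZ" by (simp add: Z_def fun_eq_iff urnZ_def urnX_def urnY_def)
  have \<A>: "\<A> = urn_filtration" by (simp add: \<A>_def fun_eq_iff urn_filtration_def observed_def)
  have "(\<integral>\<^sup>+\<omega>. (SUP r. ennreal \<bar>A r \<omega>\<bar>) \<partial>M) \<le> ennreal (\<beta> / 4 * (1 / (x + y)))"
    using Mart(1) A_pred doob unfolding Z \<A> by (rule nn_integral_SUP_predictable_le)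
  also have "\<dots> \<le> ennreal (\<beta> / (x + y))"
    using distribution_on_Icc_nonneg[OF \<mu>] \<open>0 < x + y\<close> by (intro ennreal_leI) (simp add: frac_le)
  finally show ?thesis .
qed

end
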